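(* Let $\mu:\mathbb{R}^{n\times n}\to\mathbb{R}$ be the matrix measure induced by an orthant-monotonic norm on $\mathbb{R}^n$. Then for every $A\in\mathbb{R}^{n\times n}$ and every diagonal matrix $D\in\mathbb{R}^{n\times n}$ with diagonal entries $d_{11},\dots,d_{nn}$, \[\mu(A)-\max_i\{d_{ii}\}\le \mu(A-D)\le \mu(A)-\min_i\{d_{ii}\}.\]
   Context: For a vector norm $|\cdot|$ on $\mathbb{R}^n$, the induced matrix norm is $\|A\|=\max_{|x|=1}|Ax|$ and the induced matrix measure is $\mu(A)=\lim_{\varepsilon\to0^+}(\|I_n+\varepsilon A\|-1)/\varepsilon$. A norm $|\cdot|$ on $\mathbb{R}^n$ is orthant-monotonic if for all $x,y\in\mathbb{R}^n$: whenever $x_iy_i\ge 0$ and $|x_i|\le|y_i|$ for all $i$, then $|x|\le|y|$. *)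

theory Defs
  imports "HOL-Analysis.Analysis"
begin

definition is_vnorm :: "(real^'n \<Rightarrow> real) \<Rightarrow> bool" where
  "is_vnorm N \<longleftrightarrow>
     (\<forall>x. 0 \<le> N x) \<and> (\<forall>x. N x = 0 \<longleftrightarrow> x = 0) \<and>
     (\<forall>c x. N (c *s x) = \<bar>c\<bar> * N x) \<and> (\<forall>x y. N (x + y) \<le> N x + N y)"

definition orthant_monotonic :: "(real^'n \<Rightarrow> real) \<Rightarrow> bool" where
  "orthant_monotonic N \<longleftrightarrow>
     (\<forall>x y. (\<forall>i. 0 \<le> x$i * y$i \<and> \<bar>x$i\<bar> \<le> \<bar>y$i\<bar>) \<longrightarrow> N x \<le> N y)"

text \<open>Induced matrix norm: max over the unit sphere (the max is attained, so Sup = Max).\<close>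
definition induced_mnorm :: "(real^'n \<Rightarrow> real) \<Rightarrow> real^'n^'n \<Rightarrow> real" where
  "induced_mnorm N A = Sup {N (A *v x) | x. N x = 1}"

definition matrix_measure :: "(real^'n \<Rightarrow> real) \<Rightarrow> real^'n^'n \<Rightarrow> real" where
  "matrix_measure N A =
     Lim (at_right 0) (\<lambda>\<epsilon>::real. (induced_mnorm N (mat 1 + \<epsilon> *\<^sub>R A) - 1) / \<epsilon>)"

end

theory Submission
  imports Defs
begin

(* The matrix measure mu(A) is the infimum of the quotients (||I + e A|| - 1) / e over e > 0,
   which increase with e because the induced norm is convex and ||I|| = 1.  As I + e (A + B) is
   the average of I + 2e A and I + 2e B, this makes mu subadditive for every induced norm.
   Orthant-monotonicity is needed only for diagonal D: for small e the matrix I + e D multiplies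
   each coordinate by a factor in [0, 1 + e max d_ii], so ||I + e D|| <= 1 + e max d_ii and
   mu(D) <= max d_ii.  Subadditivity applied to A - D = A + (-D) and A = (A - D) + D gives
   the two inequalities. *)

lemma vnorm_nonneg: "is_vnorm N \<Longrightarrow> 0 \<le> N x"
  by (simp add: is_vnorm_def)

lemma vnorm_eq_0_iff: "is_vnorm N \<Longrightarrow> N x = 0 \<longleftrightarrow> x = 0"
  by (simp add: is_vnorm_def)

lemma vnorm_zero: "is_vnorm N \<Longrightarrow> N 0 = 0"
  by (simp add: vnorm_eq_0_iff)

lemma vnorm_pos: "is_vnorm N \<Longrightarrow> x \<noteq> 0 \<Longrightarrow> 0 < N x"
  using vnorm_nonneg vnorm_eq_0_iff by (metis order_le_less)

lemma vnorm_scaleR: "is_vnorm N \<Longrightarrow> N (c *\<^sub>R x) = \<bar>c\<bar> * N x"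
  by (simp add: is_vnorm_def flip: scalar_mult_eq_scaleR)

lemma vnorm_minus: "is_vnorm N \<Longrightarrow> N (- x) = N x"
  using vnorm_scaleR[of N "-1" x] by simp

lemma vnorm_triangle: "is_vnorm N \<Longrightarrow> N (x + y) \<le> N x + N y"
  by (simp add: is_vnorm_def)

lemma vnorm_sum_le:
  assumes "is_vnorm N" "finite S"
  shows "N (sum f S) \<le> (\<Sum>i\<in>S. N (f i))"
  using assms(2)
proof (induction S rule: finite_induct)
  case empty
  then show ?case using vnorm_zero[OF assms(1)] by simp
next
  case (insert a S)
  then show ?case using vnorm_triangle[OF assms(1), of "f a" "sum f S"] by simp
qed

lemma vnorm_le_norm:
  assumes "is_vnorm N"
  shows "N x \<le> (\<Sum>i\<in>UNIV. N (axis i 1)) * norm x"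
proof -
  have "N x = N (\<Sum>i\<in>UNIV. x$i *\<^sub>R axis i 1)"
    using basis_expansion[of x] by (simp add: scalar_mult_eq_scaleR)
  also have "\<dots> \<le> (\<Sum>i\<in>UNIV. N (x$i *\<^sub>R axis i 1))"
    by (rule vnorm_sum_le[OF assms]) simp
  also have "\<dots> = (\<Sum>i\<in>UNIV. \<bar>x$i\<bar> * N (axis i 1))"
    by (simp add: vnorm_scaleR[OF assms])
  also have "\<dots> \<le> (\<Sum>i\<in>UNIV. norm x * N (axis i 1))"
    by (intro sum_mono mult_right_mono component_le_norm_cart vnorm_nonneg[OF assms])
  finally show ?thesis by (simp add: sum_distrib_left mult.commute)
qed

lemma vnorm_continuous:
  fixes N :: "real^'n \<Rightarrow> real"
  assumes "is_vnorm N"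
  shows "continuous_on UNIV N"
proof (rule lipschitz_on_continuous_on[OF lipschitz_onI])
  let ?C = "\<Sum>i\<in>UNIV. N (axis i 1)"
  show "0 \<le> ?C" by (simp add: sum_nonneg vnorm_nonneg[OF assms])
  fix x y :: "real^'n"
  have "N x \<le> N (x - y) + N y" "N y \<le> N (y - x) + N x"
    using vnorm_triangle[OF assms, of "x - y" y] vnorm_triangle[OF assms, of "y - x" x] by simp_all
  moreover have "N (y - x) = N (x - y)"
    using vnorm_minus[OF assms, of "x - y"] by simp
  moreover have "N (x - y) \<le> ?C * dist x y"
    using vnorm_le_norm[OF assms] by (simp add: dist_norm)
  ultimately show "dist (N x) (N y) \<le> ?C * dist x y"
    by (simp add: dist_real_def abs_le_iff)
qed

lemma vnorm_ge_norm:
  assumes "is_vnorm N"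
  obtains c where "0 < c" "\<And>x. c * norm x \<le> N x"
proof -
  have "sphere (0::real^'n) 1 \<noteq> {}"
    using vector_choose_size[of 1] by (auto simp: dist_norm)
  then obtain u where "u \<in> sphere 0 1" "\<forall>y\<in>sphere 0 1. N u \<le> N y"
    using continuous_attains_inf[OF compact_sphere _ continuous_on_subset[OF vnorm_continuous[OF assms] subset_UNIV]]
    by blast
  then have u: "norm u = 1" and min: "\<And>y. norm y = 1 \<Longrightarrow> N u \<le> N y"
    by (auto simp: dist_norm)
  have "N u * norm x \<le> N x" for x
  proof (cases "x = 0")
    case False
    then have "N u \<le> N ((1 / norm x) *\<^sub>R x)" by (intro min) simp
    then show ?thesis using False by (simp add: vnorm_scaleR[OF assms] field_simps)
  qed (simp add: vnorm_nonneg[OF assms])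
  moreover have "0 < N u" using u vnorm_pos[OF assms, of u] by force
  ultimately show ?thesis using that by blast
qed

lemma vnorm_matrix_vector_bounded:
  assumes "is_vnorm N"
  obtains K where "\<And>x. N (B *v x) \<le> K * N x"
proof -
  let ?C = "\<Sum>i\<in>UNIV. N (axis i 1)"
  obtain c where c: "0 < c" "\<And>x. c * norm x \<le> N x"
    using vnorm_ge_norm[OF assms] by blast
  obtain K0 where K0: "0 \<le> K0" "\<And>x. norm (B *v x) \<le> K0 * norm x"
    using bounded_linear.nonneg_bounded[OF matrix_vector_mul_bounded_linear[of B]]
    by (auto simp: mult.commute)
  have C: "0 \<le> ?C" by (simp add: sum_nonneg vnorm_nonneg[OF assms])
  have "N (B *v x) \<le> (?C * K0 / c) * N x" for x
  proof -
    have "N (B *v x) \<le> ?C * (K0 * norm x)"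
      using vnorm_le_norm[OF assms, of "B *v x"] mult_left_mono[OF K0(2)[of x] C] by linarith
    also have "\<dots> \<le> ?C * (K0 * (N x / c))"
      using c K0(1) C by (intro mult_left_mono) (auto simp: pos_le_divide_eq mult.commute)
    finally show ?thesis by simp
  qed
  then show ?thesis using that by blast
qed

lemma vnorm_unit_exists:
  assumes "is_vnorm N"
  obtains x :: "real^'n" where "N x = 1"
proof -
  have "N (axis undefined 1) \<noteq> 0"
    using vnorm_eq_0_iff[OF assms] by (simp add: axis_eq_0_iff)
  then have "N ((1 / N (axis undefined 1)) *\<^sub>R axis undefined 1) = 1"
    by (simp add: vnorm_scaleR[OF assms] vnorm_nonneg[OF assms])
  then show ?thesis using that by blast
qed

lemma induced_mnorm_le_iff:
  assumes "is_vnorm N"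
  shows "induced_mnorm N B \<le> K \<longleftrightarrow> (\<forall>x. N (B *v x) \<le> K * N x)"
proof
  assume le: "\<forall>x. N (B *v x) \<le> K * N x"
  show "induced_mnorm N B \<le> K" unfolding induced_mnorm_def
  proof (rule cSup_least)
    show "{N (B *v x) |x. N x = 1} \<noteq> {}" using vnorm_unit_exists[OF assms] by blast
  qed (use le in \<open>auto, metis mult.right_neutral\<close>)
next
  assume le: "induced_mnorm N B \<le> K"
  obtain K1 where "\<And>x. N (B *v x) \<le> K1 * N x"
    using vnorm_matrix_vector_bounded[OF assms] by blast
  then have bdd: "bdd_above {N (B *v x) |x. N x = 1}"
    by (intro bdd_aboveI[of _ K1]) (auto, metis mult.right_neutral)
  show "\<forall>x. N (B *v x) \<le> K * N x"
  proof
    fix x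
    show "N (B *v x) \<le> K * N x"
    proof (cases "x = 0")
      case False
      then have pos: "0 < N x" by (rule vnorm_pos[OF assms])
      have "N (B *v ((1 / N x) *\<^sub>R x)) \<le> induced_mnorm N B"
        unfolding induced_mnorm_def using pos
        by (intro cSup_upper[OF _ bdd]) (auto simp: vnorm_scaleR[OF assms])
      then have "N (B *v x) / N x \<le> K"
        using le pos by (simp add: matrix_vector_mult_scaleR vnorm_scaleR[OF assms])
      then show ?thesis using pos by (simp add: divide_le_eq)
    qed (simp add: vnorm_zero[OF assms])
  qed
qed

lemma induced_mnorm_bound:
  "is_vnorm N \<Longrightarrow> N (B *v x) \<le> induced_mnorm N B * N x"
  using induced_mnorm_le_iff[of N B "induced_mnorm N B"] by simp

lemma induced_mnorm_mat_1:
  assumes "is_vnorm N"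
  shows "induced_mnorm N (mat 1) = 1"
proof (rule antisym)
  show "induced_mnorm N (mat 1) \<le> 1" using induced_mnorm_le_iff[OF assms] by simp
  obtain x where "N x = 1" using vnorm_unit_exists[OF assms] by blast
  then show "1 \<le> induced_mnorm N (mat 1)"
    using induced_mnorm_bound[OF assms, of "mat 1" x] by simp
qed

lemma induced_mnorm_nonneg_combination:
  assumes "is_vnorm N" "0 \<le> a" "0 \<le> b"
  shows "induced_mnorm N (a *\<^sub>R B + b *\<^sub>R C) \<le> a * induced_mnorm N B + b * induced_mnorm N C"
  unfolding induced_mnorm_le_iff[OF assms(1)]
proof
  fix x
  have "N ((a *\<^sub>R B + b *\<^sub>R C) *v x) \<le> a * N (B *v x) + b * N (C *v x)"
    using vnorm_triangle[OF assms(1), of "a *\<^sub>R (B *v x)" "b *\<^sub>R (C *v x)"] assms(2,3)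
    by (simp add: matrix_vector_mult_add_rdistrib vnorm_scaleR[OF assms(1)]
        flip: scaleR_matrix_vector_assoc)
  also have "\<dots> \<le> a * (induced_mnorm N B * N x) + b * (induced_mnorm N C * N x)"
    using induced_mnorm_bound[OF assms(1)] assms(2,3) by (intro add_mono mult_left_mono) auto
  finally show "N ((a *\<^sub>R B + b *\<^sub>R C) *v x) \<le> (a * induced_mnorm N B + b * induced_mnorm N C) * N x"
    by (simp add: algebra_simps)
qed

definition measure_quotient :: "(real^'n \<Rightarrow> real) \<Rightarrow> real^'n^'n \<Rightarrow> real \<Rightarrow> real" where
  "measure_quotient N A \<epsilon> = (induced_mnorm N (mat 1 + \<epsilon> *\<^sub>R A) - 1) / \<epsilon>"

lemma measure_quotient_mono:
  assumes "is_vnorm N" "0 < s" "s \<le> t"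
  shows "measure_quotient N A s \<le> measure_quotient N A t"
proof -
  have t: "0 < t" using assms by simp
  have eq: "mat 1 + s *\<^sub>R A = (s/t) *\<^sub>R (mat 1 + t *\<^sub>R A) + (1 - s/t) *\<^sub>R mat 1"
    using t by (simp add: algebra_simps)
  have "induced_mnorm N (mat 1 + s *\<^sub>R A)
      \<le> (s/t) * induced_mnorm N (mat 1 + t *\<^sub>R A) + (1 - s/t) * induced_mnorm N (mat 1)"
    unfolding eq by (rule induced_mnorm_nonneg_combination) (use assms t in auto)
  then have "induced_mnorm N (mat 1 + s *\<^sub>R A) - 1 \<le> s * ((induced_mnorm N (mat 1 + t *\<^sub>R A) - 1) / t)"
    by (simp add: induced_mnorm_mat_1[OF assms(1)] algebra_simps diff_divide_distrib)
  then show ?thesis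
    unfolding measure_quotient_def using assms(2) by (simp add: pos_divide_le_eq mult.commute)
qed

lemma measure_quotient_lower_bound:
  assumes "is_vnorm N" "0 < \<epsilon>"
  shows "- induced_mnorm N (- A) \<le> measure_quotient N A \<epsilon>"
proof -
  have "induced_mnorm N (1 *\<^sub>R (mat 1 + \<epsilon> *\<^sub>R A) + \<epsilon> *\<^sub>R (- A))
      \<le> 1 * induced_mnorm N (mat 1 + \<epsilon> *\<^sub>R A) + \<epsilon> * induced_mnorm N (- A)"
    by (rule induced_mnorm_nonneg_combination) (use assms in auto)
  then have "1 \<le> induced_mnorm N (mat 1 + \<epsilon> *\<^sub>R A) + \<epsilon> * induced_mnorm N (- A)"
    by (simp add: induced_mnorm_mat_1[OF assms(1)])
  then show ?thesis
    unfolding measure_quotient_def using assms(2) by (simp add: le_divide_eq algebra_simps)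
qed

lemma matrix_measure_eq_Inf:
  assumes "is_vnorm N"
  shows "matrix_measure N A = Inf (measure_quotient N A ` {0<..})"
proof -
  let ?q = "measure_quotient N A"
  let ?L = "Inf (?q ` {0<..})"
  have bdd: "bdd_below (?q ` {0<..})"
    using measure_quotient_lower_bound[OF assms, where A = A]
    by (intro bdd_belowI[of _ "- induced_mnorm N (- A)"]) auto
  have "(?q \<longlongrightarrow> ?L) (at_right 0)"
  proof (rule order_tendstoI)
    fix a assume "a < ?L"
    then show "eventually (\<lambda>\<epsilon>. a < ?q \<epsilon>) (at_right 0)"
      using eventually_at_right_less[of "0::real"] cInf_lower[OF _ bdd]
      by (auto elim!: eventually_mono intro: less_le_trans)
  next
    fix a assume "?L < a"
    then obtain t where t: "0 < t" "?q t < a" by (auto simp: cInf_less_iff[OF _ bdd])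
    show "eventually (\<lambda>\<epsilon>. ?q \<epsilon> < a) (at_right 0)"
      using eventually_at_right_real[OF t(1)]
    proof eventually_elim
      case (elim \<epsilon>)
      then show ?case using measure_quotient_mono[OF assms, of \<epsilon> t A] t(2) by simp
    qed
  qed
  then show ?thesis
    unfolding matrix_measure_def measure_quotient_def[abs_def] by (simp add: tendsto_Lim)
qed

lemma matrix_measure_le_quotient:
  assumes "is_vnorm N" "0 < \<epsilon>"
  shows "matrix_measure N A \<le> measure_quotient N A \<epsilon>"
  unfolding matrix_measure_eq_Inf[OF assms(1)]
  using measure_quotient_lower_bound[OF assms(1), where A = A] assms(2)
  by (intro cInf_lower bdd_belowI[of _ "- induced_mnorm N (- A)"]) auto

lemma measure_quotient_add_le:
  assumes "is_vnorm N" "0 < \<epsilon>"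
  shows "measure_quotient N (A + B) \<epsilon>
    \<le> measure_quotient N A (2 * \<epsilon>) + measure_quotient N B (2 * \<epsilon>)"
proof -
  let ?X = "induced_mnorm N (mat 1 + \<epsilon> *\<^sub>R (A + B))"
  let ?Y = "induced_mnorm N (mat 1 + (2 * \<epsilon>) *\<^sub>R A)"
  let ?Z = "induced_mnorm N (mat 1 + (2 * \<epsilon>) *\<^sub>R B)"
  have eq: "mat 1 + \<epsilon> *\<^sub>R (A + B)
      = (1/2) *\<^sub>R (mat 1 + (2 * \<epsilon>) *\<^sub>R A) + (1/2) *\<^sub>R (mat 1 + (2 * \<epsilon>) *\<^sub>R B)"
    by (simp add: vec_eq_iff mat_def algebra_simps)
  have "?X \<le> (1/2) * ?Y + (1/2) * ?Z"
    unfolding eq by (rule induced_mnorm_nonneg_combination[OF assms(1)]) auto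
  then have "(?X - 1) / \<epsilon> \<le> ((?Y + ?Z) / 2 - 1) / \<epsilon>"
    using assms(2) by (intro divide_right_mono) auto
  also have "\<dots> = (?Y - 1) / (2 * \<epsilon>) + (?Z - 1) / (2 * \<epsilon>)"
    using assms(2) by (simp add: field_simps)
  finally show ?thesis unfolding measure_quotient_def .
qed

lemma matrix_measure_add_le:
  assumes "is_vnorm N"
  shows "matrix_measure N (A + B) \<le> matrix_measure N A + matrix_measure N B"
proof -
  let ?q = "measure_quotient N"
  have bound: "matrix_measure N (A + B) \<le> ?q A s + ?q B t" if "0 < s" "0 < t" for s t
  proof -
    define \<epsilon> where "\<epsilon> = min s t / 2"
    have \<epsilon>: "0 < \<epsilon>" "2 * \<epsilon> \<le> s" "2 * \<epsilon> \<le> t"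
      using that by (auto simp: \<epsilon>_def)
    have "matrix_measure N (A + B) \<le> ?q (A + B) \<epsilon>"
      by (rule matrix_measure_le_quotient[OF assms \<epsilon>(1)])
    also have "\<dots> \<le> ?q A (2 * \<epsilon>) + ?q B (2 * \<epsilon>)"
      by (rule measure_quotient_add_le[OF assms \<epsilon>(1)])
    also have "\<dots> \<le> ?q A s + ?q B t"
      using \<epsilon> by (intro add_mono measure_quotient_mono[OF assms]) auto
    finally show ?thesis .
  qed
  have "matrix_measure N (A + B) - ?q B t \<le> matrix_measure N A" if "0 < t" for t
    unfolding matrix_measure_eq_Inf[OF assms, of A]
    using bound that by (intro cInf_greatest) (auto simp: algebra_simps)
  then have "matrix_measure N (A + B) - matrix_measure N A \<le> matrix_measure N B"
    unfolding matrix_measure_eq_Inf[OF assms, of B]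
    by (intro cInf_greatest) (auto simp: algebra_simps)
  then show ?thesis by simp
qed

lemma orthant_monotonic_scale_coordinates:
  assumes "is_vnorm N" "orthant_monotonic N" "\<forall>i. 0 \<le> d i \<and> d i \<le> c"
  shows "N (\<chi> i. d i * x$i) \<le> c * N x"
proof -
  have "0 \<le> (d i * x$i) * (c * x$i) \<and> \<bar>d i * x$i\<bar> \<le> \<bar>c * x$i\<bar>" for i
  proof -
    have d: "0 \<le> d i" "d i \<le> c" using assms(3) by auto
    have "0 \<le> (d i * c) * (x$i)\<^sup>2" using d by simp
    also have "\<dots> = (d i * x$i) * (c * x$i)"
      by (simp add: power2_eq_square algebra_simps)
    finally have "0 \<le> (d i * x$i) * (c * x$i)" .
    moreover have "\<bar>d i * x$i\<bar> \<le> \<bar>c * x$i\<bar>"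
      using d by (simp add: abs_mult mult_right_mono)
    ultimately show ?thesis by simp
  qed
  then have "N (\<chi> i. d i * x$i) \<le> N (c *\<^sub>R x)"
    using assms(2) by (simp add: orthant_monotonic_def)
  moreover have "0 \<le> c" using assms(3) by (meson order_trans)
  ultimately show ?thesis by (simp add: vnorm_scaleR[OF assms(1)])
qed

lemma diagonal_matrix_vector_mult:
  assumes "\<forall>i j. i \<noteq> j \<longrightarrow> D$i$j = 0"
  shows "D *v x = (\<chi> i. D$i$i * x$i)"
proof -
  have "(\<Sum>j\<in>UNIV. D$i$j * x$j) = (\<Sum>j\<in>UNIV. if j = i then D$i$i * x$i else 0)" for i
    using assms by (intro sum.cong) auto
  then show ?thesis by (simp add: vec_eq_iff matrix_vector_mult_def)
qed

lemma matrix_measure_diagonal_le: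
  assumes "is_vnorm N" "orthant_monotonic N" "\<forall>i j. i \<noteq> j \<longrightarrow> D$i$j = 0"
    and "\<forall>i. D$i$i \<le> M"
  shows "matrix_measure N D \<le> M"
proof -
  define S where "S = (\<Sum>i\<in>UNIV. \<bar>D$i$i\<bar>)"
  define \<epsilon> where "\<epsilon> = 1 / (1 + S)"
  have S: "0 \<le> S" "\<And>i. \<bar>D$i$i\<bar> \<le> S"
    unfolding S_def by (auto intro: sum_nonneg member_le_sum)
  then have \<epsilon>: "0 < \<epsilon>" unfolding \<epsilon>_def by simp
  have factors: "\<forall>i. 0 \<le> 1 + \<epsilon> * D$i$i \<and> 1 + \<epsilon> * D$i$i \<le> 1 + \<epsilon> * M"
  proof
    fix i
    have "\<epsilon> * \<bar>D$i$i\<bar> \<le> 1"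
      using S unfolding \<epsilon>_def by (simp add: divide_le_eq add_increasing)
    moreover have "- (\<epsilon> * D$i$i) \<le> \<epsilon> * \<bar>D$i$i\<bar>"
      using mult_left_mono[OF abs_ge_minus_self[of "D$i$i"], of \<epsilon>] \<epsilon> by simp
    moreover have "\<epsilon> * D$i$i \<le> \<epsilon> * M"
      using assms(4) \<epsilon> by (simp add: mult_left_mono)
    ultimately show "0 \<le> 1 + \<epsilon> * D$i$i \<and> 1 + \<epsilon> * D$i$i \<le> 1 + \<epsilon> * M"
      by linarith
  qed
  have "(mat 1 + \<epsilon> *\<^sub>R D) *v x = (\<chi> i. (1 + \<epsilon> * D$i$i) * x$i)" for x
    using assms(3) by (subst diagonal_matrix_vector_mult) (auto simp: mat_def)
  then have "induced_mnorm N (mat 1 + \<epsilon> *\<^sub>R D) \<le> 1 + \<epsilon> * M"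
    using orthant_monotonic_scale_coordinates[OF assms(1,2) factors]
    by (simp add: induced_mnorm_le_iff[OF assms(1)])
  then have "measure_quotient N D \<epsilon> \<le> M"
    unfolding measure_quotient_def using \<epsilon> by (simp add: divide_le_eq mult.commute)
  then show ?thesis using matrix_measure_le_quotient[OF assms(1) \<epsilon>, of D] by simp
qed

theorem proposition1:
  fixes N :: "real^'n \<Rightarrow> real" and A D :: "real^'n^'n"
  assumes "is_vnorm N" and "orthant_monotonic N"
    and "\<forall>i j. i \<noteq> j \<longrightarrow> D$i$j = 0"
  shows "matrix_measure N A - Max (range (\<lambda>i. D$i$i)) \<le> matrix_measure N (A - D)
       \<and> matrix_measure N (A - D) \<le> matrix_measure N A - Min (range (\<lambda>i. D$i$i))"
proof
  have "matrix_measure N A \<le> matrix_measure N (A - D) + matrix_measure N D"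
    using matrix_measure_add_le[OF assms(1), of "A - D" D] by simp
  moreover have "matrix_measure N D \<le> Max (range (\<lambda>i. D$i$i))"
    by (rule matrix_measure_diagonal_le[OF assms]) simp
  ultimately show "matrix_measure N A - Max (range (\<lambda>i. D$i$i)) \<le> matrix_measure N (A - D)"
    by linarith
next
  have "matrix_measure N (A - D) \<le> matrix_measure N A + matrix_measure N (- D)"
    using matrix_measure_add_le[OF assms(1), of A "- D"] by simp
  moreover have "matrix_measure N (- D) \<le> - Min (range (\<lambda>i. D$i$i))"
    by (rule matrix_measure_diagonal_le[OF assms(1,2)]) (use assms(3) in simp_all)
  ultimately show "matrix_measure N (A - D) \<le> matrix_measure N A - Min (range (\<lambda>i. D$i$i))"
    by linarith
qed

end
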